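(* Let $B>0$, $\beta>0$, and $\mathcal{G}\subseteq\mathbb{R}^d$. Then $\mathcal{M}_{B,\beta}$ is $\max_{\boldsymbol g\in\mathcal{G}}\sum_{i=1}^d\log\left(1+\frac{1}{\beta+\mathrm{dist}(g_i,\mathcal{C}_B)}\right)$-differentially private on $\mathcal{G}$.
   Context: For $B>0$, $\mathrm{clip}\{g,B\}=\max\{-B,\min\{B,g\}\}$. The randomized compressor $\mathcal{M}_{B,\beta}:\mathbb{R}^d\to\{-1,1\}^d$ acts independently on each coordinate: $[\mathcal{M}_{B,\beta}]_i(\boldsymbol g)=1$ with probability $\frac{B+\beta+\mathrm{clip}\{g_i,B\}}{2B+2\beta}$ and $=-1$ otherwise, where $g_i$ is the $i$-th coordinate of $\boldsymbol g$. Let $\mathcal{C}_B=(-\infty,-B)\cup(B,\infty)$ and for $g\in\mathbb{R}$ let $\mathrm{dist}(g,\mathcal{C}_B)=\inf_{g'\in\mathcal{C}_B}|g-g'|$. A randomized algorithm $\mathcal{M}$ is $\epsilon$-differentially private on $\mathcal{G}$ if $\Pr[\mathcal{M}(x)\in\mathcal{S}]\le e^{\epsilon}\Pr[\mathcal{M}(y)\in\mathcal{S}]$ for all subsets $\mathcal{S}$ of its range and all $x,y\in\mathcal{G}$ with $\|x-y\|_1\le1$. *)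

theory Defs
  imports "HOL-Analysis.Analysis" "HOL-Probability.Probability"
begin

definition clip :: "real \<Rightarrow> real \<Rightarrow> real" where
  "clip g B = max (- B) (min B g)"

definition plus_prob :: "real \<Rightarrow> real \<Rightarrow> real \<Rightarrow> real" where
  "plus_prob B \<beta> g = (B + \<beta> + clip g B) / (2 * B + 2 * \<beta>)"

definition compressor :: "real \<Rightarrow> real \<Rightarrow> real ^ 'n \<Rightarrow> ('n \<Rightarrow> int) pmf" where
  "compressor B \<beta> g =
     Pi_pmf UNIV 0 (\<lambda>i. map_pmf (\<lambda>b. if b then 1 else -1)
                                  (bernoulli_pmf (plus_prob B \<beta> (g $ i))))"

definition CB :: "real \<Rightarrow> real set" where
  "CB B = {..< - B} \<union> {B <..}"

definition diff_private_on :: "real \<Rightarrow> (real ^ 'n) set \<Rightarrow> (real ^ 'n \<Rightarrow> 'b pmf) \<Rightarrow> bool" where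
  "diff_private_on \<epsilon> G M \<longleftrightarrow>
     (\<forall>x\<in>G. \<forall>y\<in>G. (\<Sum>i\<in>UNIV. \<bar>x $ i - y $ i\<bar>) \<le> 1 \<longrightarrow>
        (\<forall>S. measure_pmf.prob (M x) S \<le> exp \<epsilon> * measure_pmf.prob (M y) S))"

end

theory Submission
  imports Defs
begin

(* Each coordinate of the output is a +1/-1 coin whose bias is an affine function of the clipped
  input. Moving the input by at most 1 moves the clipped value, hence the numerator of either
  probability, by at most 1; and the numerator is at least beta + dist(g_i, C_B). So the likelihood
  ratio per coordinate is at most 1 + 1 / (beta + dist(g_i, C_B)), and by independence of the
  coordinates the ratio of the product distributions is at most the product of these factors. *)

lemma add_one_le_one_plus_inverse_mult:
  fixes s t :: real
  assumes "0 < s" and "s \<le> t"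
  shows "t + 1 \<le> (1 + 1 / s) * t"
proof -
  have "1 \<le> t / s" using assms by simp
  then show ?thesis by (simp add: algebra_simps)
qed

lemma measure_pmf_le_of_pmf_le:
  assumes "\<And>x. pmf p x \<le> c * pmf q x"
  shows "measure_pmf.prob p S \<le> c * measure_pmf.prob q S"
proof -
  have "measure_pmf.prob p S = infsetsum (pmf p) S"
    by (rule measure_pmf_conv_infsetsum)
  also have "\<dots> \<le> infsetsum (\<lambda>x. c * pmf q x) S"
    by (intro infsetsum_mono assms abs_summable_on_cmult_right pmf_abs_summable)
  also have "\<dots> = c * measure_pmf.prob q S"
    by (simp add: infsetsum_cmult_right pmf_abs_summable measure_pmf_conv_infsetsum)
  finally show ?thesis .
qed

lemma pmf_Pi_pmf_le:
  assumes "finite A" and "\<And>i v. pmf (p i) v \<le> r i * pmf (q i) v"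
  shows "pmf (Pi_pmf A d p) f \<le> prod r A * pmf (Pi_pmf A d q) f"
  using assms by (auto simp: pmf_Pi prod.distrib[symmetric] intro!: prod_mono)

lemma infdist_le_dist_closure:
  fixes A :: "'a::metric_space set"
  assumes "a \<in> closure A"
  shows "infdist x A \<le> dist x a"
proof -
  have "A \<noteq> {}" using assms by auto
  then have "infdist a A = 0" using assms in_closure_iff_infdist_zero by blast
  then show ?thesis using infdist_triangle[of x A a] by simp
qed

definition sign_pmf :: "real \<Rightarrow> int pmf" where
  "sign_pmf p = map_pmf (\<lambda>b. if b then 1 else -1) (bernoulli_pmf p)"

lemma pmf_sign_pmf:
  assumes "0 \<le> p" and "p \<le> 1"
  shows "pmf (sign_pmf p) v = (if v = 1 then p else if v = -1 then 1 - p else 0)"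
proof -
  have "pmf (sign_pmf p) v = measure (bernoulli_pmf p) ((\<lambda>b. if b then 1 else -1) -` {v})"
    unfolding sign_pmf_def by (rule pmf_map)
  moreover have "(\<lambda>b. if b then 1 else -1) -` {v} =
      (if v = 1 then {True} else if v = -1 then {False} else {})"
    by (auto split: if_splits)
  ultimately show ?thesis using assms by (simp add: measure_pmf_single)
qed

lemma pmf_sign_pmf_le:
  assumes "0 \<le> p" "p \<le> 1" "0 \<le> q" "q \<le> 1"
    and "p \<le> c * q" and "1 - p \<le> c * (1 - q)"
  shows "pmf (sign_pmf p) v \<le> c * pmf (sign_pmf q) v"
  using assms by (simp add: pmf_sign_pmf)

lemma compressor_eq_Pi_pmf:
  "compressor B \<beta> g = Pi_pmf UNIV 0 (\<lambda>i. sign_pmf (plus_prob B \<beta> (g $ i)))"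
  by (simp add: compressor_def sign_pmf_def)

lemma clip_abs_le: "B \<ge> 0 \<Longrightarrow> \<bar>clip g B\<bar> \<le> B"
  by (auto simp: clip_def)

lemma clip_dist_le: "\<bar>clip a B - clip b B\<bar> \<le> \<bar>a - b\<bar>"
  by (auto simp: clip_def)

lemma plus_prob_bounds:
  assumes "B \<ge> 0" and "\<beta> > 0"
  shows "0 \<le> plus_prob B \<beta> g" and "plus_prob B \<beta> g \<le> 1"
  using clip_abs_le[of B g] assms by (auto simp: plus_prob_def field_simps)

lemma closure_CB: "closure (CB B) = {..- B} \<union> {B..}"
  by (simp add: CB_def closure_Un)

lemma infdist_CB_le:
  assumes "B \<ge> 0"
  shows "infdist b (CB B) \<le> B - \<bar>clip b B\<bar>"
proof (cases "\<bar>b\<bar> \<le> B")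
  case True
  have "infdist b (CB B) \<le> dist b (- B)" and "infdist b (CB B) \<le> dist b B"
    by (auto intro!: infdist_le_dist_closure simp: closure_CB)
  with True show ?thesis by (auto simp: clip_def dist_real_def)
next
  case False
  then have "b \<in> CB B" by (auto simp: CB_def)
  with False assms show ?thesis by (auto simp: clip_def)
qed

lemma plus_prob_le_mult:
  assumes "B \<ge> 0" and "\<beta> > 0" and "\<bar>a - b\<bar> \<le> 1"
  defines "\<rho> \<equiv> 1 + 1 / (\<beta> + infdist b (CB B))"
  shows "plus_prob B \<beta> a \<le> \<rho> * plus_prob B \<beta> b"
    and "1 - plus_prob B \<beta> a \<le> \<rho> * (1 - plus_prob B \<beta> b)"
proof -
  define K where "K = 2 * B + 2 * \<beta>"
  have "K > 0" using assms by (simp add: K_def)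
  have signed: "(\<beta> + B + \<sigma> * clip a B) / K \<le> \<rho> * ((\<beta> + B + \<sigma> * clip b B) / K)"
    if "\<sigma> = 1 \<or> \<sigma> = -1" for \<sigma>
  proof -
    have "\<sigma> * clip a B \<le> \<sigma> * clip b B + 1"
      using that clip_dist_le[of a B b] assms(3) by auto
    moreover have "\<beta> + infdist b (CB B) \<le> \<beta> + B + \<sigma> * clip b B"
      using that infdist_CB_le[of B b] assms(1) by auto
    moreover have "0 < \<beta> + infdist b (CB B)"
      using assms(2) infdist_nonneg[of b "CB B"] by linarith
    ultimately have "\<beta> + B + \<sigma> * clip a B \<le> \<rho> * (\<beta> + B + \<sigma> * clip b B)"
      using add_one_le_one_plus_inverse_mult unfolding \<rho>_def by fastforce
    then show ?thesis using \<open>K > 0\<close> by (simp add: divide_right_mono)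
  qed
  have plus: "plus_prob B \<beta> g = (\<beta> + B + 1 * clip g B) / K"
    and minus: "1 - plus_prob B \<beta> g = (\<beta> + B + (-1) * clip g B) / K" for g
    using \<open>K > 0\<close> by (simp_all add: plus_prob_def K_def field_simps)
  show "plus_prob B \<beta> a \<le> \<rho> * plus_prob B \<beta> b"
    unfolding plus using signed[of 1] by simp
  show "1 - plus_prob B \<beta> a \<le> \<rho> * (1 - plus_prob B \<beta> b)"
    unfolding minus using signed[of "-1"] by simp
qed

lemma pmf_compressor_le:
  assumes "B \<ge> 0" and "\<beta> > 0" and "\<And>i. \<bar>x $ i - y $ i\<bar> \<le> 1"
  shows "pmf (compressor B \<beta> x) \<omega> \<le>
    exp (\<Sum>i\<in>UNIV. ln (1 + 1 / (\<beta> + infdist (y $ i) (CB B)))) * pmf (compressor B \<beta> y) \<omega>"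
proof -
  have "0 < 1 + 1 / (\<beta> + infdist (y $ i) (CB B))" for i
    using assms(2) infdist_nonneg[of "y $ i" "CB B"] by (simp add: add_pos_nonneg)
  then have "exp (\<Sum>i\<in>UNIV. ln (1 + 1 / (\<beta> + infdist (y $ i) (CB B)))) =
      (\<Prod>i\<in>UNIV. 1 + 1 / (\<beta> + infdist (y $ i) (CB B)))"
    by (simp add: exp_sum)
  moreover have "pmf (sign_pmf (plus_prob B \<beta> (x $ i))) v \<le>
      (1 + 1 / (\<beta> + infdist (y $ i) (CB B))) * pmf (sign_pmf (plus_prob B \<beta> (y $ i))) v" for i v
    using assms by (intro pmf_sign_pmf_le plus_prob_bounds plus_prob_le_mult)
  ultimately show ?thesis
    unfolding compressor_eq_Pi_pmf by (simp add: pmf_Pi_pmf_le)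
qed

lemma ln_one_plus_inverse_le:
  fixes \<beta> d :: real
  assumes "\<beta> > 0" and "d \<ge> 0"
  shows "ln (1 + 1 / (\<beta> + d)) \<le> ln (1 + 1 / \<beta>)"
proof -
  have "1 / (\<beta> + d) \<le> 1 / \<beta>" using assms by (intro divide_left_mono) auto
  then show ?thesis using assms by (simp add: add_pos_nonneg)
qed

lemma bdd_above_privacy_loss:
  assumes "\<beta> > 0"
  shows "bdd_above ((\<lambda>g :: real ^ 'n. \<Sum>i\<in>UNIV. ln (1 + 1 / (\<beta> + infdist (g $ i) (CB B)))) ` G)"
proof (rule bdd_aboveI2)
  fix g :: "real ^ 'n"
  show "(\<Sum>i\<in>UNIV. ln (1 + 1 / (\<beta> + infdist (g $ i) (CB B)))) \<le> (\<Sum>i::'n\<in>UNIV. ln (1 + 1 / \<beta>))"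
    by (intro sum_mono ln_one_plus_inverse_le assms infdist_nonneg)
qed

theorem theorem3:
  fixes B \<beta> :: real and G :: "(real ^ 'n) set"
  assumes "B > 0" and "\<beta> > 0"
  shows "diff_private_on
           (SUP g\<in>G. \<Sum>i\<in>UNIV. ln (1 + 1 / (\<beta> + infdist (g $ i) (CB B))))
           G (compressor B \<beta>)"
  unfolding diff_private_on_def
proof (intro ballI impI allI)
  fix x y :: "real ^ 'n" and S
  assume "x \<in> G" and "y \<in> G" and neighbours: "(\<Sum>i\<in>UNIV. \<bar>x $ i - y $ i\<bar>) \<le> 1"
  define loss where "loss g = (\<Sum>i\<in>UNIV. ln (1 + 1 / (\<beta> + infdist (g $ i) (CB B))))"
    for g :: "real ^ 'n"
  have "\<bar>x $ i - y $ i\<bar> \<le> 1" for i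
    using member_le_sum[of i UNIV "\<lambda>i. \<bar>x $ i - y $ i\<bar>"] neighbours by simp
  then have "measure_pmf.prob (compressor B \<beta> x) S \<le>
      exp (loss y) * measure_pmf.prob (compressor B \<beta> y) S"
    unfolding loss_def using assms by (intro measure_pmf_le_of_pmf_le pmf_compressor_le) auto
  also have "\<dots> \<le> exp (SUP g\<in>G. loss g) * measure_pmf.prob (compressor B \<beta> y) S"
    using cSUP_upper[OF \<open>y \<in> G\<close> bdd_above_privacy_loss[OF assms(2)]]
    by (intro mult_right_mono) (simp_all add: loss_def)
  finally show "measure_pmf.prob (compressor B \<beta> x) S \<le>
      exp (SUP g\<in>G. loss g) * measure_pmf.prob (compressor B \<beta> y) S" .
qed

end
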